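(* Let $p\ge 1$ be odd and $q\ge 2$, and let $R_p(p,q)$ be the prolate rectangle-shaped hexagonal system with parameters $p,q$. Then $$cf(R_p(p,q))=\frac{p+1}{2}\,(q+1).$$
   Context: A hexagonal system (HS) is a finite 2-connected plane graph in which every interior face is a regular hexagon of the hexagonal lattice; it is drawn with some edges vertical, so that hexagons form horizontal rows in which consecutive hexagons share a vertical edge. $R_p(p,q)$ has $p$ horizontal rows (numbered $1,\ldots,p$ from bottom to top, $p$ odd): each odd-numbered row is a linear chain of $q$ hexagons and each even-numbered row is a linear chain of $q-1$ hexagons, consecutive rows are stacked in the hexagonal lattice, and every even row is inset half a hexagon from both ends of the adjacent odd rows (so all odd rows are vertically aligned with each other). For example $R_p(3,2)$ is perylene. For a perfect matching $M$, a forcing set of $M$ is a subset of $M$ contained in no other perfect matching; a complete forcing set of $G$ is a set $S\subseteq E(G)$ with $S\cap M$ a forcing set of $M$ for every perfect matching $M$; $cf(G)$ is the minimum size of a complete forcing set. *)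

theory Defs
  imports Main
begin

text \<open>Graphs are given by a vertex set V and a set E of edges, each edge a
2-element set of vertices.\<close>

definition perfect_matching :: "'v set \<Rightarrow> 'v set set \<Rightarrow> 'v set set \<Rightarrow> bool" where
  "perfect_matching V E M \<longleftrightarrow> M \<subseteq> E \<and> (\<forall>v\<in>V. \<exists>!e. e \<in> M \<and> v \<in> e)"

definition forcing_set :: "'v set \<Rightarrow> 'v set set \<Rightarrow> 'v set set \<Rightarrow> 'v set set \<Rightarrow> bool" where
  "forcing_set V E M S \<longleftrightarrow> S \<subseteq> M \<and>
     (\<forall>M'. perfect_matching V E M' \<and> S \<subseteq> M' \<longrightarrow> M' = M)"

definition complete_forcing_set :: "'v set \<Rightarrow> 'v set set \<Rightarrow> 'v set set \<Rightarrow> bool" where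
  "complete_forcing_set V E S \<longleftrightarrow> S \<subseteq> E \<and>
     (\<forall>M. perfect_matching V E M \<longrightarrow> forcing_set V E M (S \<inter> M))"

definition cf :: "'v set \<Rightarrow> 'v set set \<Rightarrow> nat" where
  "cf V E = (LEAST n. \<exists>S. complete_forcing_set V E S \<and> card S = n)"

text \<open>Hexagonal lattice in brick-wall coordinates: the hexagon with lower-left
corner (a,j) (where a+j is even) has vertices (a..a+2, j) and (a..a+2, j+1),
four horizontal edges and two vertical edges {(a,j),(a,j+1)}, {(a+2,j),(a+2,j+1)}.
Hexagons in the same horizontal row with corners a and a+2 share a vertical edge;
the row above is shifted by one unit (= half a hexagon).\<close>

definition hex_verts :: "int \<Rightarrow> int \<Rightarrow> (int \<times> int) set" where
  "hex_verts a j = {(a,j),(a+1,j),(a+2,j),(a,j+1),(a+1,j+1),(a+2,j+1)}"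

definition hex_edges :: "int \<Rightarrow> int \<Rightarrow> (int \<times> int) set set" where
  "hex_edges a j = {{(a,j),(a+1,j)}, {(a+1,j),(a+2,j)},
                    {(a,j+1),(a+1,j+1)}, {(a+1,j+1),(a+2,j+1)},
                    {(a,j),(a,j+1)}, {(a+2,j),(a+2,j+1)}}"

text \<open>Hexagons (lower-left corners) of R_p(p,q): rows r = 0..p-1 (row r+1 in the
paper's numbering).\<close>
definition Rp_hexagons :: "nat \<Rightarrow> nat \<Rightarrow> (int \<times> int) set" where
  "Rp_hexagons p q =
     {(2 * int k, int r) | r k. r < p \<and> even r \<and> k < q} \<union>
     {(2 * int k + 1, int r) | r k. r < p \<and> odd r \<and> k + 1 < q}"

definition Rp_verts :: "nat \<Rightarrow> nat \<Rightarrow> (int \<times> int) set" where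
  "Rp_verts p q = (\<Union>(a,j)\<in>Rp_hexagons p q. hex_verts a j)"

definition Rp_edges :: "nat \<Rightarrow> nat \<Rightarrow> (int \<times> int) set set" where
  "Rp_edges p q = (\<Union>(a,j)\<in>Rp_hexagons p q. hex_edges a j)"

end

theory Submission
  imports Defs
begin

text \<open>R_p(p,q) is the brick wall on [0,2q] \<times> [0,p]. In a perfect
matching, row y has one more even than odd vertex and every horizontal edge covers one of
each, so the vertical edges meeting row y cover one more even than odd vertex; by induction
on y the level between rows y and y + 1 carries exactly one vertical edge if y is even and
none if y is odd. Since the horizontal edges are then forced row by row, the (p+1)/2 (q+1)
vertical edges with both coordinates even form a complete forcing set. Conversely, for each
even level 2i and each column 2k, shifting the vertical edge of a comb-shaped matching
from column 2k to a neighbouring even column changes only three edges around column 2k;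
these triples are pairwise disjoint and each one must meet every complete forcing set.\<close>

section \<open>Perfect matchings and complete forcing sets\<close>

lemma perfect_matching_subset: "perfect_matching V E M \<Longrightarrow> M \<subseteq> E"
  unfolding perfect_matching_def by blast

lemma perfect_matching_covers: "perfect_matching V E M \<Longrightarrow> v \<in> V \<Longrightarrow> \<exists>e\<in>M. v \<in> e"
  unfolding perfect_matching_def by blast

lemma perfect_matching_unique:
  "perfect_matching V E M \<Longrightarrow> v \<in> V \<Longrightarrow> e \<in> M \<Longrightarrow> e' \<in> M \<Longrightarrow> v \<in> e \<Longrightarrow> v \<in> e' \<Longrightarrow> e = e'"
  unfolding perfect_matching_def by blast

lemma perfect_matching_of_involution:
  assumes "\<And>v. v \<in> V \<Longrightarrow> f v \<in> V" "\<And>v. v \<in> V \<Longrightarrow> f (f v) = v"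
    and "\<And>v. v \<in> V \<Longrightarrow> {v, f v} \<in> E"
  shows "perfect_matching V E ((\<lambda>v. {v, f v}) ` V)"
  unfolding perfect_matching_def
proof (intro conjI ballI)
  show "(\<lambda>v. {v, f v}) ` V \<subseteq> E" using assms(3) by auto
next
  fix v assume v: "v \<in> V"
  show "\<exists>!e. e \<in> (\<lambda>v. {v, f v}) ` V \<and> v \<in> e"
  proof (rule ex1I[of _ "{v, f v}"])
    fix e assume "e \<in> (\<lambda>v. {v, f v}) ` V \<and> v \<in> e"
    then obtain w where "w \<in> V" "e = {w, f w}" "v = w \<or> v = f w" by auto
    then show "e = {v, f v}" using assms(2) by auto
  qed (use v in auto)
qed

lemma complete_forcing_set_meets_diff:
  assumes "complete_forcing_set V E S" "perfect_matching V E M" "perfect_matching V E M'" "M \<noteq> M'"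
  shows "S \<inter> (M - M') \<noteq> {}"
  using assms unfolding complete_forcing_set_def forcing_set_def by blast

lemma card_le_if_meets_disjoint_family:
  assumes "finite S" and meets: "\<And>i. i \<in> I \<Longrightarrow> S \<inter> T i \<noteq> {}"
    and disjoint: "\<And>i j e. i \<in> I \<Longrightarrow> j \<in> I \<Longrightarrow> e \<in> T i \<Longrightarrow> e \<in> T j \<Longrightarrow> i = j"
  shows "card I \<le> card S"
proof -
  define f where "f i = (SOME e. e \<in> S \<inter> T i)" for i
  have f: "f i \<in> S \<inter> T i" if "i \<in> I" for i
    unfolding f_def using meets[OF that] some_in_eq by metis
  have "inj_on f I"
  proof (rule inj_onI)
    fix i j assume "i \<in> I" "j \<in> I" "f i = f j"
    then show "i = j" using f[of i] f[of j] disjoint[of i j "f i"] by auto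
  qed
  then show ?thesis
    using f \<open>finite S\<close> by (intro card_inj_on_le[of f I S]) auto
qed

lemma cf_eqI:
  assumes "complete_forcing_set V E S"
    and "\<And>S'. complete_forcing_set V E S' \<Longrightarrow> card S \<le> card S'"
  shows "cf V E = card S"
  unfolding cf_def by (rule Least_equality) (use assms in auto)

section \<open>The brick wall\<close>

definition hedge :: "int \<Rightarrow> int \<Rightarrow> (int \<times> int) set" where
  "hedge x y = {(x, y), (x + 1, y)}"

definition vedge :: "int \<Rightarrow> int \<Rightarrow> (int \<times> int) set" where
  "vedge x y = {(x, y), (x, y + 1)}"

definition grid_verts :: "nat \<Rightarrow> nat \<Rightarrow> (int \<times> int) set" where
  "grid_verts p q = {(x, y). 0 \<le> x \<and> x \<le> 2 * int q \<and> 0 \<le> y \<and> y \<le> int p}"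

definition grid_edges :: "nat \<Rightarrow> nat \<Rightarrow> (int \<times> int) set set" where
  "grid_edges p q =
     {hedge x y | x y. 0 \<le> x \<and> x < 2 * int q \<and> 0 \<le> y \<and> y \<le> int p} \<union>
     {vedge x y | x y. 0 \<le> x \<and> x \<le> 2 * int q \<and> 0 \<le> y \<and> y < int p \<and> even (x + y)}"

lemma hedge_eq_iff [simp]: "hedge a b = hedge c d \<longleftrightarrow> a = c \<and> b = d"
  unfolding hedge_def by (auto simp: doubleton_eq_iff)

lemma vedge_eq_iff [simp]: "vedge a b = vedge c d \<longleftrightarrow> a = c \<and> b = d"
  unfolding vedge_def by (auto simp: doubleton_eq_iff)

lemma hedge_neq_vedge [simp]: "hedge a b \<noteq> vedge c d" "vedge c d \<noteq> hedge a b"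
  unfolding vedge_def hedge_def by (auto simp: doubleton_eq_iff)

lemma mem_hedge: "(a, b) \<in> hedge x y \<longleftrightarrow> b = y \<and> (a = x \<or> a = x + 1)"
  unfolding hedge_def by auto

lemma mem_vedge: "(a, b) \<in> vedge x y \<longleftrightarrow> a = x \<and> (b = y \<or> b = y + 1)"
  unfolding vedge_def by auto

lemma mem_grid_verts [simp]:
  "(x, y) \<in> grid_verts p q \<longleftrightarrow> 0 \<le> x \<and> x \<le> 2 * int q \<and> 0 \<le> y \<and> y \<le> int p"
  unfolding grid_verts_def by auto

lemma hedge_in_grid_edges_iff [simp]:
  "hedge x y \<in> grid_edges p q \<longleftrightarrow> 0 \<le> x \<and> x < 2 * int q \<and> 0 \<le> y \<and> y \<le> int p"
  unfolding grid_edges_def by auto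

lemma vedge_in_grid_edges_iff [simp]:
  "vedge x y \<in> grid_edges p q \<longleftrightarrow>
     0 \<le> x \<and> x \<le> 2 * int q \<and> 0 \<le> y \<and> y < int p \<and> even (x + y)"
  unfolding grid_edges_def by auto

lemma grid_edge_at_vertex:
  assumes "e \<in> grid_edges p q" "(x, y) \<in> e"
  shows "e = hedge (x - 1) y \<or> e = hedge x y \<or> e = vedge x (y - 1) \<or> e = vedge x y"
  using assms unfolding grid_edges_def by (auto simp: mem_hedge mem_vedge)

lemma finite_grid_edges: "finite (grid_edges p q)"
proof -
  have "grid_edges p q \<subseteq> Pow ({0..2 * int q} \<times> {0..int p})"
    unfolding grid_edges_def hedge_def vedge_def by auto
  then show ?thesis by (rule finite_subset) simp
qed

lemma Rp_hexagon_evenI: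
  assumes "0 \<le> k" "k < int q" "0 \<le> r" "r < int p" "even r"
  shows "(2 * k, r) \<in> Rp_hexagons p q"
  unfolding Rp_hexagons_def using assms
  by (intro UnI1 CollectI exI[of _ "nat r"] exI[of _ "nat k"]) (auto simp: even_nat_iff)

lemma Rp_hexagon_oddI:
  assumes "0 \<le> k" "k + 1 < int q" "0 \<le> r" "r < int p" "odd r"
  shows "(2 * k + 1, r) \<in> Rp_hexagons p q"
  unfolding Rp_hexagons_def using assms
  by (intro UnI2 CollectI exI[of _ "nat r"] exI[of _ "nat k"]) (auto simp: even_nat_iff)

lemma hex_edges_eq:
  "hex_edges a j = {hedge a j, hedge (a + 1) j, hedge a (j + 1), hedge (a + 1) (j + 1),
                    vedge a j, vedge (a + 2) j}"
  unfolding hex_edges_def hedge_def vedge_def by (simp add: add.assoc)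


lemma two_mul_div_two_bounds: "2 * (y div 2) \<le> y" "y \<le> 2 * (y div 2) + 1" for y :: int
  by presburger+

text \<open>Vertex row y bounds the hexagon row 2 (y div 2); as p is odd, this hexagon row exists
even for the top row y = p.\<close>

lemma even_row_below:
  assumes "odd p" "0 \<le> y" "y \<le> int p"
  shows "0 \<le> 2 * (y div 2)" "2 * (y div 2) < int p"
proof -
  have "2 * (y div 2) \<noteq> int p" using \<open>odd p\<close> by (metis even_of_nat dvd_triv_left)
  moreover have "0 \<le> y div 2" using \<open>0 \<le> y\<close> by simp
  ultimately show "0 \<le> 2 * (y div 2)" "2 * (y div 2) < int p"
    using assms two_mul_div_two_bounds[of y] by linarith+
qed

lemma Rp_verts_eq_grid:
  assumes "odd p" "1 \<le> q"
  shows "Rp_verts p q = grid_verts p q"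
proof
  show "Rp_verts p q \<subseteq> grid_verts p q"
    unfolding Rp_verts_def Rp_hexagons_def grid_verts_def hex_verts_def by auto
  show "grid_verts p q \<subseteq> Rp_verts p q"
  proof (clarify)
    fix x y assume "(x, y) \<in> grid_verts p q"
    then have xy: "0 \<le> x" "x \<le> 2 * int q" "0 \<le> y" "y \<le> int p" by auto
    define k where "k = min (x div 2) (int q - 1)"
    define r where "r = 2 * (y div 2)"
    have k: "0 \<le> k" "k < int q" "2 * k \<le> x" "x \<le> 2 * k + 2"
      using xy assms two_mul_div_two_bounds[of x] unfolding k_def min_def by auto
    have r: "0 \<le> r" "r < int p" "r \<le> y" "y \<le> r + 1"
      using even_row_below[OF \<open>odd p\<close> xy(3,4)] two_mul_div_two_bounds[of y] unfolding r_def by auto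
    have "(2 * k, r) \<in> Rp_hexagons p q" using k r by (intro Rp_hexagon_evenI) (auto simp: r_def)
    moreover have "x = 2 * k \<or> x = 2 * k + 1 \<or> x = 2 * k + 2" "y = r \<or> y = r + 1"
      using k r by auto
    then have "(x, y) \<in> hex_verts (2 * k) r" unfolding hex_verts_def by auto
    ultimately show "(x, y) \<in> Rp_verts p q" unfolding Rp_verts_def by blast
  qed
qed

lemma hex_edges_subset_Rp_edges: "(a, j) \<in> Rp_hexagons p q \<Longrightarrow> hex_edges a j \<subseteq> Rp_edges p q"
  unfolding Rp_edges_def by blast

lemma hedge_in_Rp_edges:
  assumes "odd p" "0 \<le> x" "x < 2 * int q" "0 \<le> y" "y \<le> int p"
  shows "hedge x y \<in> Rp_edges p q"
proof -
  define k where "k = x div 2"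
  define r where "r = 2 * (y div 2)"
  have "(2 * k, r) \<in> Rp_hexagons p q"
    using assms even_row_below[OF \<open>odd p\<close> assms(4,5)] two_mul_div_two_bounds[of x]
    unfolding k_def r_def by (intro Rp_hexagon_evenI) auto
  moreover have "x = 2 * k \<or> x = 2 * k + 1" "y = r \<or> y = r + 1"
    using two_mul_div_two_bounds[of x] two_mul_div_two_bounds[of y] unfolding k_def r_def by auto
  then have "hedge x y \<in> hex_edges (2 * k) r" unfolding hex_edges_eq by auto
  ultimately show ?thesis using hex_edges_subset_Rp_edges by blast
qed

lemma vedge_in_Rp_edges:
  assumes "2 \<le> q" "0 \<le> x" "x \<le> 2 * int q" "0 \<le> y" "y < int p" "even (x + y)"
  shows "vedge x y \<in> Rp_edges p q"
proof (cases "even y")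
  case True
  define k where "k = min (x div 2) (int q - 1)"
  have "x = 2 * (x div 2)" using assms(6) True by presburger
  then have "0 \<le> k" "k < int q" "x = 2 * k \<or> x = 2 * k + 2"
    using assms unfolding k_def min_def by auto
  then have "(2 * k, y) \<in> Rp_hexagons p q" "vedge x y \<in> hex_edges (2 * k) y"
    using assms True unfolding hex_edges_eq by (auto intro: Rp_hexagon_evenI)
  then show ?thesis using hex_edges_subset_Rp_edges by blast
next
  case False
  define k where "k = min ((x - 1) div 2) (int q - 2)"
  have "x = 2 * ((x - 1) div 2) + 1" "x \<noteq> 2 * int q" "x \<noteq> 0"
    using assms(6) False by presburger+
  then have "0 \<le> k" "k + 1 < int q" "x = 2 * k + 1 \<or> x = 2 * k + 1 + 2"
    using assms unfolding k_def min_def by auto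
  then have "(2 * k + 1, y) \<in> Rp_hexagons p q" "vedge x y \<in> hex_edges (2 * k + 1) y"
    using assms False unfolding hex_edges_eq by (auto intro: Rp_hexagon_oddI)
  then show ?thesis using hex_edges_subset_Rp_edges by blast
qed

lemma Rp_edges_eq_grid:
  assumes "odd p" "2 \<le> q"
  shows "Rp_edges p q = grid_edges p q"
proof
  show "Rp_edges p q \<subseteq> grid_edges p q"
    unfolding Rp_edges_def Rp_hexagons_def hex_edges_eq by (auto simp: even_nat_iff)
  show "grid_edges p q \<subseteq> Rp_edges p q"
    unfolding grid_edges_def using hedge_in_Rp_edges[OF assms(1)] vedge_in_Rp_edges[OF assms(2)]
    by auto
qed

section \<open>Vertical edges of a perfect matching\<close>

lemma card_int_interval_parity:
  "card {x::int. 0 \<le> x \<and> x \<le> 2 * int q \<and> even x = b} = (if b then q + 1 else q)"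
proof (cases b)
  case True
  have "{x::int. 0 \<le> x \<and> x \<le> 2 * int q \<and> even x = b} = (\<lambda>i. 2 * int i) ` {..q}"
  proof (intro equalityI subsetI)
    fix x assume "x \<in> {x::int. 0 \<le> x \<and> x \<le> 2 * int q \<and> even x = b}"
    then have "x = 2 * int (nat (x div 2))" "nat (x div 2) \<in> {..q}" using True by auto
    then show "x \<in> (\<lambda>i. 2 * int i) ` {..q}" by blast
  qed (use True in auto)
  moreover have "card ((\<lambda>i. 2 * int i) ` {..q}) = q + 1"
    by (subst card_image) (auto simp: inj_on_def)
  ultimately show ?thesis using True by simp
next
  case False
  have "{x::int. 0 \<le> x \<and> x \<le> 2 * int q \<and> even x = b} = (\<lambda>i. 2 * int i + 1) ` {..<q}"
  proof (intro equalityI subsetI)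
    fix x assume "x \<in> {x::int. 0 \<le> x \<and> x \<le> 2 * int q \<and> even x = b}"
    then have "0 \<le> x" "x \<le> 2 * int q" "odd x" using False by auto
    then have "0 \<le> x div 2" "x div 2 < int q" "x = 2 * (x div 2) + 1" by presburger+
    then have "x = 2 * int (nat (x div 2)) + 1" "nat (x div 2) \<in> {..<q}" by auto
    then show "x \<in> (\<lambda>i. 2 * int i + 1) ` {..<q}" by blast
  qed (use False in auto)
  moreover have "card ((\<lambda>i. 2 * int i + 1) ` {..<q}) = q"
    by (subst card_image) (auto simp: inj_on_def)
  ultimately show ?thesis using False by simp
qed

definition vlevel :: "(int \<times> int) set set \<Rightarrow> int \<Rightarrow> int set" where
  "vlevel M y = {x. vedge x y \<in> M}"

definition hrow :: "(int \<times> int) set set \<Rightarrow> int \<Rightarrow> int set" where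
  "hrow M y = {x. hedge x y \<in> M}"

locale grid_matching =
  fixes p q :: nat and M :: "(int \<times> int) set set"
  assumes perfect: "perfect_matching (grid_verts p q) (grid_edges p q) M"
begin

lemma vlevel_bounds: "x \<in> vlevel M y \<Longrightarrow> 0 \<le> x \<and> x \<le> 2 * int q \<and> 0 \<le> y \<and> y < int p \<and> even (x + y)"
  using perfect_matching_subset[OF perfect] unfolding vlevel_def by auto

lemma hrow_bounds: "x \<in> hrow M y \<Longrightarrow> 0 \<le> x \<and> x < 2 * int q \<and> 0 \<le> y \<and> y \<le> int p"
  using perfect_matching_subset[OF perfect] unfolding hrow_def by auto

lemma finite_vlevel: "finite (vlevel M y)"
  by (rule finite_subset[of _ "{0..2 * int q}"]) (use vlevel_bounds in auto)

lemma hrow_not_adjacent: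
  assumes "x \<in> hrow M y" "x + 1 \<in> hrow M y"
  shows False
proof -
  have "(x + 1, y) \<in> grid_verts p q" using hrow_bounds[OF assms(1)] by auto
  then have "hedge x y = hedge (x + 1) y"
    by (rule perfect_matching_unique[OF perfect]) (use assms in \<open>auto simp: hrow_def mem_hedge\<close>)
  then show False by simp
qed

lemma hrow_vlevel_disjoint:
  assumes "x \<in> hrow M y" "x' \<in> vlevel M y'" "x' = x \<or> x' = x + 1" "y' = y \<or> y' = y - 1"
  shows False
proof -
  have "(x', y) \<in> grid_verts p q" using hrow_bounds[OF assms(1)] assms(3) by auto
  then have "hedge x y = vedge x' y'"
    by (rule perfect_matching_unique[OF perfect])
      (use assms in \<open>auto simp: hrow_def vlevel_def mem_hedge mem_vedge\<close>)
  then show False by simp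
qed

lemma uncovered_iff_hrow:
  assumes "0 \<le> x" "x \<le> 2 * int q" "0 \<le> y" "y \<le> int p"
  shows "x \<notin> vlevel M y \<union> vlevel M (y - 1) \<longleftrightarrow> x \<in> hrow M y \<or> x - 1 \<in> hrow M y"
proof
  assume uncovered: "x \<notin> vlevel M y \<union> vlevel M (y - 1)"
  obtain e where e: "e \<in> M" "(x, y) \<in> e"
    using perfect_matching_covers[OF perfect] assms by fastforce
  then have "e \<in> grid_edges p q" using perfect_matching_subset[OF perfect] by blast
  from grid_edge_at_vertex[OF this e(2)] e(1) uncovered
  show "x \<in> hrow M y \<or> x - 1 \<in> hrow M y" by (auto simp: hrow_def vlevel_def)
next
  assume "x \<in> hrow M y \<or> x - 1 \<in> hrow M y"
  then show "x \<notin> vlevel M y \<union> vlevel M (y - 1)"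
    using hrow_vlevel_disjoint[of x y x] hrow_vlevel_disjoint[of "x - 1" y x] by fastforce
qed

lemma card_uncovered_parity:
  assumes "0 \<le> y" "y \<le> int p"
  shows "card {x. 0 \<le> x \<and> x \<le> 2 * int q \<and> even x = b \<and> x \<notin> vlevel M y \<union> vlevel M (y - 1)}
           = card (hrow M y)"
proof -
  define g where "g h = (if even h = b then h else h + 1)" for h :: int
  have "bij_betw g (hrow M y)
          {x. 0 \<le> x \<and> x \<le> 2 * int q \<and> even x = b \<and> x \<notin> vlevel M y \<union> vlevel M (y - 1)}"
  proof (rule bij_betw_imageI)
    show "inj_on g (hrow M y)"
    proof (rule inj_onI)
      fix h h' assume "h \<in> hrow M y" "h' \<in> hrow M y" "g h = g h'"
      then show "h = h'"
        using hrow_not_adjacent[of h y] hrow_not_adjacent[of h' y]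
        unfolding g_def by (auto split: if_splits)
    qed
    show "g ` hrow M y =
            {x. 0 \<le> x \<and> x \<le> 2 * int q \<and> even x = b \<and> x \<notin> vlevel M y \<union> vlevel M (y - 1)}"
    proof (intro equalityI subsetI)
      fix x assume "x \<in> g ` hrow M y"
      then obtain h where h: "h \<in> hrow M y" "x = g h" by blast
      then have "x = h \<or> x - 1 = h" "even x = b" unfolding g_def by auto
      with h(1) show "x \<in> {x. 0 \<le> x \<and> x \<le> 2 * int q \<and> even x = b \<and>
                                x \<notin> vlevel M y \<union> vlevel M (y - 1)}"
        using uncovered_iff_hrow[of x y] hrow_bounds[of h y] by auto
    next
      fix x assume "x \<in> {x. 0 \<le> x \<and> x \<le> 2 * int q \<and> even x = b \<and>
                              x \<notin> vlevel M y \<union> vlevel M (y - 1)}"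
      then have x: "even x = b" "x \<in> hrow M y \<or> x - 1 \<in> hrow M y"
        using uncovered_iff_hrow[of x y] assms by auto
      then have "x = g x \<and> x \<in> hrow M y \<or> x = g (x - 1) \<and> x - 1 \<in> hrow M y"
        unfolding g_def by auto
      then show "x \<in> g ` hrow M y" by blast
    qed
  qed
  then show ?thesis by (simp add: bij_betw_same_card)
qed

lemma vlevel_balance:
  assumes "0 \<le> y" "y \<le> int p"
  defines "W \<equiv> vlevel M y \<union> vlevel M (y - 1)"
  shows "card {x \<in> W. even x} = card {x \<in> W. odd x} + 1"
proof -
  have W: "finite W" "W \<subseteq> {0..2 * int q}"
    using finite_vlevel vlevel_bounds unfolding W_def by auto
  have uncovered: "card {x. 0 \<le> x \<and> x \<le> 2 * int q \<and> even x = b} - card {x \<in> W. even x = b}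
                   = card (hrow M y)" for b
  proof -
    have "{x. 0 \<le> x \<and> x \<le> 2 * int q \<and> even x = b \<and> x \<notin> W}
          = {x. 0 \<le> x \<and> x \<le> 2 * int q \<and> even x = b} - {x \<in> W. even x = b}"
      by auto
    moreover have "{x \<in> W. even x = b} \<subseteq> {x. 0 \<le> x \<and> x \<le> 2 * int q \<and> even x = b}"
      using W by auto
    ultimately show ?thesis
      using card_uncovered_parity[OF assms(1,2), of b] W(1) unfolding W_def
      by (simp add: card_Diff_subset)
  qed
  have bound: "card {x \<in> W. even x = b} \<le> card {x. 0 \<le> x \<and> x \<le> 2 * int q \<and> even x = b}" for b
    using W by (intro card_mono) (auto intro: finite_subset[of _ "{0..2 * int q}"])
  show ?thesis
    using uncovered[of True] uncovered[of False] bound[of True] bound[of False]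
    unfolding card_int_interval_parity by simp
qed


lemma vlevel_empty: "y < 0 \<or> int p \<le> y \<Longrightarrow> vlevel M y = {}"
  using vlevel_bounds by fastforce

lemma vlevel_parity:
  "{x \<in> vlevel M y \<union> vlevel M (y - 1). even x} = (if even y then vlevel M y else vlevel M (y - 1))"
  "{x \<in> vlevel M y \<union> vlevel M (y - 1). odd x} = (if even y then vlevel M (y - 1) else vlevel M y)"
  using vlevel_bounds[of _ y] vlevel_bounds[of _ "y - 1"] by auto

lemma card_vlevel: "n < p \<Longrightarrow> card (vlevel M (int n)) = (if even n then 1 else 0)"
proof (induction n)
  case 0
  then show ?case using vlevel_balance[of 0] vlevel_empty[of "-1"] unfolding vlevel_parity by simp
next
  case (Suc n)
  then show ?case using vlevel_balance[of "int (Suc n)"] unfolding vlevel_parity by auto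
qed

lemma hrow_iff:
  "x \<in> hrow M y \<longleftrightarrow> 0 \<le> x \<and> x < 2 * int q \<and> 0 \<le> y \<and> y \<le> int p \<and>
     x - 1 \<notin> hrow M y \<and> x \<notin> vlevel M y \<union> vlevel M (y - 1)"
  using hrow_bounds[of x y] hrow_not_adjacent[of "x - 1" y] uncovered_iff_hrow[of x y] by auto

lemma matching_eq_hrow_vlevel:
  "M = {hedge x y | x y. x \<in> hrow M y} \<union> {vedge x y | x y. x \<in> vlevel M y}"
proof (intro equalityI subsetI)
  fix e assume "e \<in> M"
  moreover have "e \<in> grid_edges p q" using \<open>e \<in> M\<close> perfect_matching_subset[OF perfect] by blast
  ultimately show "e \<in> {hedge x y | x y. x \<in> hrow M y} \<union> {vedge x y | x y. x \<in> vlevel M y}"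
    unfolding grid_edges_def hrow_def vlevel_def by auto
qed (auto simp: hrow_def vlevel_def)

text \<open>The horizontal edges are forced by the vertical ones, sweeping each row from left
to right.\<close>

lemma eq_if_vlevel_eq:
  assumes "grid_matching p q M'" and vlevel_eq: "\<And>y. vlevel M' y = vlevel M y"
  shows "M' = M"
proof -
  interpret M': grid_matching p q M' by fact
  have sweep: "int n - 1 \<in> hrow M' y \<longleftrightarrow> int n - 1 \<in> hrow M y" for n y
  proof (induction n)
    case 0
    then show ?case using hrow_bounds M'.hrow_bounds by force
  next
    case (Suc n)
    then show ?case using hrow_iff[of "int n" y] M'.hrow_iff[of "int n" y] vlevel_eq by simp
  qed
  have "x \<in> hrow M' y \<longleftrightarrow> x \<in> hrow M y" for x y
  proof (cases "0 \<le> x")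
    case True
    then show ?thesis using sweep[of "Suc (nat x)" y] by simp
  next
    case False
    then show ?thesis using hrow_bounds M'.hrow_bounds by force
  qed
  then show ?thesis
    using matching_eq_hrow_vlevel M'.matching_eq_hrow_vlevel vlevel_eq by auto
qed

end

section \<open>The upper bound\<close>

definition even_vedges :: "nat \<Rightarrow> nat \<Rightarrow> (int \<times> int) set set" where
  "even_vedges p q =
     {vedge x y | x y. 0 \<le> x \<and> x \<le> 2 * int q \<and> 0 \<le> y \<and> y < int p \<and> even x \<and> even y}"

lemma card_even_vedges:
  assumes "odd p"
  shows "card (even_vedges p q) = (p + 1) div 2 * (q + 1)"
proof -
  have half: "int ((p + 1) div 2) = (int p + 1) div 2" by (simp add: zdiv_int)
  have "even_vedges p q = (\<lambda>(i, j). vedge (2 * int i) (2 * int j)) ` ({..q} \<times> {..<(p + 1) div 2})"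
  proof (intro equalityI subsetI)
    fix e assume "e \<in> even_vedges p q"
    then obtain x y where xy: "e = vedge x y" "0 \<le> x" "x \<le> 2 * int q" "0 \<le> y" "y < int p"
      "even x" "even y"
      unfolding even_vedges_def by auto
    have "y div 2 < (int p + 1) div 2" using xy by presburger
    then have "nat (y div 2) < (p + 1) div 2" using half xy by linarith
    moreover have "x = 2 * int (nat (x div 2))" "y = 2 * int (nat (y div 2))" "nat (x div 2) \<le> q"
      using xy by auto
    ultimately show "e \<in> (\<lambda>(i, j). vedge (2 * int i) (2 * int j)) ` ({..q} \<times> {..<(p + 1) div 2})"
      using xy(1) by (intro image_eqI[where x="(nat (x div 2), nat (y div 2))"]) auto
  next
    fix e assume "e \<in> (\<lambda>(i, j). vedge (2 * int i) (2 * int j)) ` ({..q} \<times> {..<(p + 1) div 2})"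
    then obtain i j where ij: "e = vedge (2 * int i) (2 * int j)" "i \<le> q" "j < (p + 1) div 2"
      by auto
    have "int j < (int p + 1) div 2" using ij(3) half by linarith
    then have "2 * int j < int p" using assms by presburger
    then show "e \<in> even_vedges p q" unfolding even_vedges_def using ij by fastforce
  qed
  moreover have "inj_on (\<lambda>(i, j). vedge (2 * int i) (2 * int j)) ({..q} \<times> {..<(p + 1) div 2})"
    by (auto simp: inj_on_def)
  ultimately show ?thesis by (simp add: card_image card_cartesian_product)
qed

lemma (in grid_matching) forced_by_even_vedges:
  assumes "grid_matching p q M'" and sub: "even_vedges p q \<inter> M \<subseteq> M'"
  shows "M' = M"
proof (rule eq_if_vlevel_eq[OF assms(1)])
  interpret M': grid_matching p q M' by fact
  fix y
  show "vlevel M' y = vlevel M y"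
  proof (cases "0 \<le> y \<and> y < int p")
    case False
    then have "y < 0 \<or> int p \<le> y" by auto
    then show ?thesis using vlevel_empty M'.vlevel_empty by simp
  next
    case True
    then obtain n where n: "y = int n" "n < p" by (metis nonneg_int_cases of_nat_less_iff)
    show ?thesis
    proof (cases "even n")
      case True
      have "vlevel M y \<subseteq> vlevel M' y"
      proof
        fix x assume x: "x \<in> vlevel M y"
        then have "vedge x y \<in> even_vedges p q"
          using vlevel_bounds[OF x] True n unfolding even_vedges_def by fastforce
        with x sub show "x \<in> vlevel M' y" unfolding vlevel_def by auto
      qed
      then show ?thesis
        using card_vlevel[OF n(2)] M'.card_vlevel[OF n(2)] M'.finite_vlevel n(1)
        by (metis card_subset_eq)
    next
      case False
      then show ?thesis
        using card_vlevel[OF n(2)] M'.card_vlevel[OF n(2)] finite_vlevel M'.finite_vlevel n(1)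
        by simp
    qed
  qed
qed

lemma even_vedges_complete_forcing:
  "complete_forcing_set (grid_verts p q) (grid_edges p q) (even_vedges p q)"
  unfolding complete_forcing_set_def forcing_set_def
proof (intro conjI allI impI)
  show "even_vedges p q \<subseteq> grid_edges p q" unfolding even_vedges_def by fastforce
  fix M M'
  assume "perfect_matching (grid_verts p q) (grid_edges p q) M"
    and "perfect_matching (grid_verts p q) (grid_edges p q) M' \<and> even_vedges p q \<inter> M \<subseteq> M'"
  then show "M' = M"
    using grid_matching.forced_by_even_vedges by (simp add: grid_matching_def)
qed simp

section \<open>Comb matchings and the lower bound\<close>

text \<open>In the double row 2j, 2j + 1 the comb uses the vertical edges in column 2 c j and
horizontal edges everywhere else.\<close>

definition comb_partner :: "(int \<Rightarrow> int) \<Rightarrow> int \<times> int \<Rightarrow> int \<times> int" where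
  "comb_partner c = (\<lambda>(x, y). let k = c (y div 2) in
     if x = 2 * k then (x, if even y then y + 1 else y - 1)
     else if x < 2 * k then (if even x then (x + 1, y) else (x - 1, y))
     else (if odd x then (x + 1, y) else (x - 1, y)))"

definition comb_matching :: "(int \<Rightarrow> int) \<Rightarrow> nat \<Rightarrow> nat \<Rightarrow> (int \<times> int) set set" where
  "comb_matching c p q = (\<lambda>v. {v, comb_partner c v}) ` grid_verts p q"

lemma comb_partner_properties:
  assumes "odd p" and c: "\<And>j. 0 \<le> c j \<and> c j \<le> int q" and "v \<in> grid_verts p q"
  shows "comb_partner c v \<in> grid_verts p q \<and> comb_partner c (comb_partner c v) = v \<and>
         {v, comb_partner c v} \<in> grid_edges p q"
proof -
  obtain x y where v: "v = (x, y)" by fastforce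
  define k where "k = c (y div 2)"
  have k: "0 \<le> k" "k \<le> int q" using c unfolding k_def by auto
  have xy: "0 \<le> x" "x \<le> 2 * int q" "0 \<le> y" "y \<le> int p" using assms(3) v by auto
  note partner = comb_partner_def Let_def k_def[symmetric]
  consider (vertical_up) "x = 2 * k" "even y" | (vertical_down) "x = 2 * k" "odd y"
    | (left_even) "x < 2 * k" "even x" | (left_odd) "x < 2 * k" "odd x"
    | (right_odd) "x > 2 * k" "odd x" | (right_even) "x > 2 * k" "even x"
    by linarith
  then show ?thesis
  proof cases
    case vertical_up
    have "y < int p" "(y + 1) div 2 = y div 2" using vertical_up xy \<open>odd p\<close> by presburger+
    then show ?thesis using vertical_up xy k unfolding v by (simp add: partner flip: vedge_def)
  next
    case vertical_down
    have "0 < y" "(y - 1) div 2 = y div 2" "even (x + (y - 1))" using vertical_down xy by presburger+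
    moreover have "{(x, y), (x, y - 1)} = vedge x (y - 1)" unfolding vedge_def by auto
    ultimately show ?thesis using vertical_down xy k unfolding v by (simp add: partner)
  next
    case left_even
    have "x + 1 < 2 * k" using left_even by presburger
    then show ?thesis using left_even xy k unfolding v by (simp add: partner flip: hedge_def)
  next
    case left_odd
    have "1 \<le> x" using left_odd xy by presburger
    moreover have "{(x, y), (x - 1, y)} = hedge (x - 1) y" unfolding hedge_def by auto
    ultimately show ?thesis using left_odd xy k unfolding v by (simp add: partner)
  next
    case right_odd
    have "x < 2 * int q" using right_odd xy by presburger
    then show ?thesis using right_odd xy k unfolding v by (simp add: partner flip: hedge_def)
  next
    case right_even
    have "2 * k < x - 1" using right_even by presburger
    moreover have "{(x, y), (x - 1, y)} = hedge (x - 1) y" unfolding hedge_def by auto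
    ultimately show ?thesis using right_even xy k unfolding v by (simp add: partner)
  qed
qed

lemma comb_matching_perfect:
  assumes "odd p" "\<And>j. 0 \<le> c j \<and> c j \<le> int q"
  shows "perfect_matching (grid_verts p q) (grid_edges p q) (comb_matching c p q)"
  unfolding comb_matching_def
  using comb_partner_properties[OF assms] by (intro perfect_matching_of_involution) auto

lemma fst_comb_partner_eq_iff: "fst (comb_partner c (x, y)) = x \<longleftrightarrow> x = 2 * c (y div 2)"
  unfolding comb_partner_def Let_def by auto

lemma vedge_in_comb_matching_iff:
  assumes "0 \<le> k" "k \<le> int q" "0 \<le> i" "2 * i < int p"
  shows "vedge (2 * k) (2 * i) \<in> comb_matching c p q \<longleftrightarrow> c i = k"
proof
  assume "vedge (2 * k) (2 * i) \<in> comb_matching c p q"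
  then obtain v where "{(2 * k, 2 * i), (2 * k, 2 * i + 1)} = {v, comb_partner c v}"
    unfolding comb_matching_def vedge_def by auto
  then have "v = (2 * k, 2 * i) \<and> comb_partner c v = (2 * k, 2 * i + 1) \<or>
             v = (2 * k, 2 * i + 1) \<and> comb_partner c v = (2 * k, 2 * i)"
    by (auto simp: doubleton_eq_iff)
  moreover have "(2 * i + 1) div 2 = i" by presburger
  ultimately show "c i = k"
    using fst_comb_partner_eq_iff[of c "2 * k" "2 * i"] fst_comb_partner_eq_iff[of c "2 * k" "2 * i + 1"]
    by auto
next
  assume "c i = k"
  then have "comb_partner c (2 * k, 2 * i) = (2 * k, 2 * i + 1)"
    unfolding comb_partner_def by simp
  moreover have "(2 * k, 2 * i) \<in> grid_verts p q" using assms by auto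
  ultimately show "vedge (2 * k) (2 * i) \<in> comb_matching c p q"
    unfolding comb_matching_def vedge_def by force
qed

lemma comb_matching_diff:
  assumes "e \<in> comb_matching c p q - comb_matching c' p q"
  obtains x y where "e = {(x, y), comb_partner c (x, y)}"
    "comb_partner c (x, y) \<noteq> comb_partner c' (x, y)"
  using assms unfolding comb_matching_def by force

text \<open>Moving the vertical edge of a double row by one column changes only the edges
next to its old column.\<close>

lemma comb_edge_diff_left:
  assumes "comb_partner c (x, y) \<noteq> comb_partner c' (x, y)"
    "c (y div 2) = K" "c' (y div 2) = K - 1"
  shows "{(x, y), comb_partner c (x, y)} \<in> {vedge (2 * K) (2 * (y div 2)), hedge (2 * K - 2) y}"
proof -
  have y: "y = 2 * (y div 2) \<and> even y \<or> y - 1 = 2 * (y div 2) \<and> odd y" by presburger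
  consider "x < 2 * K - 2" | "x = 2 * K - 2" | "x = 2 * K - 1" | "x = 2 * K" | "x > 2 * K"
    by linarith
  then show ?thesis
  proof cases
    case 2
    then have "even x" by presburger
    with 2 assms show ?thesis by (auto simp: comb_partner_def hedge_def)
  next
    case 3
    then have "odd x" by presburger
    with 3 assms show ?thesis by (auto simp: comb_partner_def hedge_def)
  next
    case 4
    with y assms show ?thesis by (auto simp: comb_partner_def vedge_def)
  qed (use assms in \<open>auto simp: comb_partner_def\<close>)
qed

lemma comb_edge_diff_right:
  assumes "comb_partner c (x, y) \<noteq> comb_partner c' (x, y)"
    "c (y div 2) = K" "c' (y div 2) = K + 1"
  shows "{(x, y), comb_partner c (x, y)} \<in> {vedge (2 * K) (2 * (y div 2)), hedge (2 * K + 1) y}"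
proof -
  have y: "y = 2 * (y div 2) \<and> even y \<or> y - 1 = 2 * (y div 2) \<and> odd y" by presburger
  consider "x < 2 * K" | "x = 2 * K" | "x = 2 * K + 1" | "x = 2 * K + 2" | "x > 2 * K + 2"
    by linarith
  then show ?thesis
  proof cases
    case 2
    with y assms show ?thesis by (auto simp: comb_partner_def vedge_def)
  next
    case 3
    then have "odd x" by presburger
    with 3 assms show ?thesis by (auto simp: comb_partner_def hedge_def)
  next
    case 4
    then have "even x" by presburger
    with 4 assms show ?thesis by (auto simp: comb_partner_def hedge_def)
  qed (use assms in \<open>auto simp: comb_partner_def\<close>)
qed

definition strip_choice :: "nat \<Rightarrow> nat \<Rightarrow> int \<Rightarrow> int" where
  "strip_choice i k = (\<lambda>j. if j = int i then int k else 0)"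

definition switch_edges :: "nat \<Rightarrow> nat \<Rightarrow> (int \<times> int) set set" where
  "switch_edges i k = (let h = if k = 0 then 1 else 2 * int k - 2 in
     {vedge (2 * int k) (2 * int i), hedge h (2 * int i), hedge h (2 * int i + 1)})"

lemma switch_edges_disjoint: "e \<in> switch_edges i k \<Longrightarrow> e \<in> switch_edges i' k' \<Longrightarrow> i = i' \<and> k = k'"
  unfolding switch_edges_def Let_def by (auto split: if_splits; presburger)

lemma comb_matching_switch:
  assumes "k' = (if k = 0 then 1 else k - 1)"
  shows "comb_matching (strip_choice i k) p q - comb_matching (strip_choice i k') p q
           \<subseteq> switch_edges i k"
proof
  fix e assume "e \<in> comb_matching (strip_choice i k) p q - comb_matching (strip_choice i k') p q"
  then obtain x y where e: "e = {(x, y), comb_partner (strip_choice i k) (x, y)}"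
    and diff: "comb_partner (strip_choice i k) (x, y) \<noteq> comb_partner (strip_choice i k') (x, y)"
    by (rule comb_matching_diff)
  have y: "y div 2 = int i"
    using diff unfolding comb_partner_def strip_choice_def by (auto split: if_splits)
  then have y_cases: "y = 2 * int i \<or> y = 2 * int i + 1" by presburger
  show "e \<in> switch_edges i k"
  proof (cases "k = 0")
    case True
    then have "e \<in> {vedge 0 (2 * int i), hedge 1 y}"
      using comb_edge_diff_right[OF diff, of 0] y assms unfolding e strip_choice_def by simp
    then show ?thesis using y_cases True unfolding switch_edges_def Let_def by auto
  next
    case False
    then have "e \<in> {vedge (2 * int k) (2 * int i), hedge (2 * int k - 2) y}"
      using comb_edge_diff_left[OF diff, of "int k"] y assms unfolding e strip_choice_def by simp
    then show ?thesis using y_cases False unfolding switch_edges_def Let_def by auto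
  qed
qed

lemma switch_edges_meet_complete_forcing:
  assumes "odd p" "1 \<le> q" "complete_forcing_set (grid_verts p q) (grid_edges p q) S"
    and "2 * int i < int p" "k \<le> q"
  shows "S \<inter> switch_edges i k \<noteq> {}"
proof -
  define k' where "k' = (if k = 0 then 1 else k - 1)"
  let ?M = "comb_matching (strip_choice i k) p q" and ?M' = "comb_matching (strip_choice i k') p q"
  have "k' \<le> q" "k' \<noteq> k" using assms unfolding k'_def by auto
  then have "perfect_matching (grid_verts p q) (grid_edges p q) ?M"
    "perfect_matching (grid_verts p q) (grid_edges p q) ?M'"
    using assms by (auto intro!: comb_matching_perfect simp: strip_choice_def)
  moreover have "vedge (2 * int k) (2 * int i) \<in> ?M - ?M'"
    using assms \<open>k' \<noteq> k\<close> by (simp add: vedge_in_comb_matching_iff strip_choice_def)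
  ultimately have "S \<inter> (?M - ?M') \<noteq> {}"
    using complete_forcing_set_meets_diff[OF assms(3)] by blast
  then show ?thesis using comb_matching_switch[OF k'_def] by blast
qed

lemma card_complete_forcing_lower:
  assumes "odd p" "1 \<le> q" "complete_forcing_set (grid_verts p q) (grid_edges p q) S"
  shows "(p + 1) div 2 * (q + 1) \<le> card S"
proof -
  have "finite S"
    using assms(3) finite_grid_edges finite_subset unfolding complete_forcing_set_def by blast
  have "2 * int i < int p" if "i < (p + 1) div 2" for i
    using that \<open>odd p\<close> by (auto elim!: oddE)
  then have "card ({..<(p + 1) div 2} \<times> {..q}) \<le> card S"
    using switch_edges_meet_complete_forcing[OF assms] switch_edges_disjoint
    by (intro card_le_if_meets_disjoint_family[OF \<open>finite S\<close>, of _ "\<lambda>(i, k). switch_edges i k"])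
      auto
  then show ?thesis by (simp add: card_cartesian_product)
qed

theorem mainTheorem11:
  fixes p q :: nat
  assumes "odd p" and "q \<ge> 2"
  shows "cf (Rp_verts p q) (Rp_edges p q) = (p + 1) div 2 * (q + 1)"
proof -
  have "cf (grid_verts p q) (grid_edges p q) = card (even_vedges p q)"
    using even_vedges_complete_forcing card_complete_forcing_lower[OF assms(1)] assms(2)
      card_even_vedges[OF assms(1)]
    by (intro cf_eqI) auto
  then show ?thesis
    using Rp_verts_eq_grid Rp_edges_eq_grid card_even_vedges assms by simp
qed

end
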